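(* Let $d>2$ be a prime integer, let $\mathcal{H}$ be a $d$-dimensional Hilbert space with orthonormal computational basis $\{|0\rangle,|1\rangle,\dots,|d-1\rangle\}$, and let $w=e^{2\pi i/d}$. Define the Chrestenson operator $$C_d=\frac{1}{\sqrt{d}}\sum_{x,y=0}^{d-1} w^{xy}\,|y\rangle\langle x|,$$ for $n,m\in\{0,1,\dots,d-1\}$ the Weyl operators $$U_{nm}=\sum_{k=0}^{d-1} w^{kn}\,|k\rangle\langle (k+m)\bmod d|,$$ and for $a,b\in\{0,1,\dots,d-1\}$ the Kronecker-Pauli operators $$\Pi_{ab}=\sum_{k=0}^{d-1} w^{(k-a)b}\,|k\rangle\langle (-k+2a)\bmod d|.$$ Then for every $n,m\in\{0,1,\dots,d-1\}$ there exist an integer $k\in\{0,1,\dots,d-1\}$ and a Kronecker-Pauli operator $\Pi$ from the family $\{\Pi_{ab} : a,b\in\{0,1,\dots,d-1\}\}$ (a family of $d^2$ operators) such that $$C_d\,U_{nm}\,C_d = w^{k}\,\Pi.$$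
   Context: Here $|j\rangle\langle j'|$ denotes the rank-one operator $v\mapsto \langle j',v\rangle |j\rangle$ on $\mathcal{H}$, and $x\bmod d$ denotes the representative of $x$ in $\{0,1,\dots,d-1\}$. In the paper the $d^2$ Kronecker-Pauli operators are enumerated as $\Pi_\ell$, $\ell\in\{1,\dots,d^2\}$; the statement above quantifies over this same family. *)

theory Defs
  imports Complex_Main "HOL-Computational_Algebra.Primes" "Jordan_Normal_Form.Matrix"
begin

text \<open>Operators on the d-dimensional Hilbert space are represented as d x d complex
  matrices w.r.t. the computational basis; the rank-one operator |j><j'| is the matrix
  unit with a 1 at row j, column j'.\<close>

definition omega :: "nat \<Rightarrow> complex" where
  "omega d = cis (2 * pi / real d)"

definition chrestenson :: "nat \<Rightarrow> complex mat" where
  "chrestenson d = mat d d (\<lambda>(y, x). omega d ^ (x * y) / complex_of_real (sqrt (real d)))"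

definition weyl :: "nat \<Rightarrow> nat \<Rightarrow> nat \<Rightarrow> complex mat" where
  "weyl d n m = mat d d (\<lambda>(i, j). if j = (i + m) mod d then omega d ^ (i * n) else 0)"

definition kron_pauli :: "nat \<Rightarrow> nat \<Rightarrow> nat \<Rightarrow> complex mat" where
  "kron_pauli d a b = mat d d (\<lambda>(i, j).
     if int j = (2 * int a - int i) mod int d
     then omega d powi ((int i - int a) * int b) else 0)"

end

theory Submission
  imports Defs "HOL-Library.Real_Mod" "HOL-Number_Theory.Cong"
begin

(*
  Summing the geometric series of d-th roots of unity shows that entry (r, c) of C U_nm C
  is w^(mc) when r + n + c = 0 (mod d), and 0 otherwise. As d is odd, 2 is invertible
  mod d, so there is an a with 2a = -n (mod d). The support condition then reads
  c = 2a - r (mod d), which is the support of Pi_ab, and on it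
  mc = m(2a - r) = am + (r - a)(-m) (mod d), so b = -m and k = am match the phases too.
*)

lemma omega_nonzero [simp]: "omega d \<noteq> 0"
  by (simp add: omega_def)

lemma omega_power: "omega d ^ t = cis (2 * pi * real t / real d)"
  by (simp add: omega_def DeMoivre mult_ac)

lemma omega_power_eq_1_iff:
  assumes "d > 0"
  shows "omega d ^ t = 1 \<longleftrightarrow> d dvd t"
proof
  assume "omega d ^ t = 1"
  then obtain q :: int where "2 * pi * real t / real d = of_int q * (2 * pi)"
    by (auto simp: omega_power cis_eq_1_iff)
  then have "real t = of_int q * real d"
    using assms by (simp add: field_simps)
  then have "int t = q * int d"
    by (metis of_int_eq_iff of_int_mult of_int_of_nat_eq)
  then show "d dvd t"
    by (metis dvd_triv_right of_nat_dvd_iff)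
next
  assume "d dvd t"
  then obtain q where "t = d * q" ..
  then show "omega d ^ t = 1"
    using assms by (simp add: power_mult omega_power)
qed

lemma omega_powi_cong:
  assumes "[x = y] (mod int d)"
  shows "omega d powi x = omega d powi y"
proof (cases "d = 0")
  case True
  with assms show ?thesis by simp
next
  case False
  obtain q where "y = x + int d * q"
    using assms cong_iff_lin by blast
  then have "omega d powi y = omega d powi x * (omega d ^ d) powi q"
    by (simp add: power_int_add power_int_mult flip: power_int_of_nat)
  also have "omega d ^ d = 1"
    using False by (simp add: omega_power_eq_1_iff)
  finally show ?thesis by simp
qed

lemma omega_power_cong: "[x = y] (mod d) \<Longrightarrow> omega d ^ x = omega d ^ y"
  using omega_powi_cong[of "int x" "int y" d] by (simp add: cong_int_iff)

lemma sum_omega_power: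
  assumes "d > 0"
  shows "(\<Sum>i<d. omega d ^ (i * t)) = (if d dvd t then of_nat d else 0)"
proof (cases "d dvd t")
  case True
  then have "omega d ^ (i * t) = 1" for i
    using assms by (simp add: omega_power_eq_1_iff)
  with True show ?thesis by simp
next
  case False
  have "(\<Sum>i<d. omega d ^ (i * t)) = (\<Sum>i<d. (omega d ^ t) ^ i)"
    by (intro sum.cong refl) (metis mult.commute power_mult)
  also have "\<dots> = ((omega d ^ t) ^ d - 1) / (omega d ^ t - 1)"
    using False assms by (simp add: geometric_sum omega_power_eq_1_iff)
  also have "(omega d ^ t) ^ d = 1"
    using assms by (simp add: omega_power_eq_1_iff flip: power_mult)
  finally show ?thesis
    using False by simp
qed

lemma dim_chrestenson [simp]:
  "dim_row (chrestenson d) = d" "dim_col (chrestenson d) = d"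
  by (simp_all add: chrestenson_def)

lemma dim_weyl [simp]:
  "dim_row (weyl d n m) = d" "dim_col (weyl d n m) = d"
  by (simp_all add: weyl_def)

lemma dim_kron_pauli [simp]:
  "dim_row (kron_pauli d a b) = d" "dim_col (kron_pauli d a b) = d"
  by (simp_all add: kron_pauli_def)

lemma index_chrestenson:
  "i < d \<Longrightarrow> j < d \<Longrightarrow>
     chrestenson d $$ (i, j) = omega d ^ (i * j) / complex_of_real (sqrt (real d))"
  by (simp add: chrestenson_def mult.commute)

lemma index_kron_pauli:
  assumes "i < d" "j < d"
  shows "kron_pauli d a b $$ (i, j) =
    (if [int j = 2 * int a - int i] (mod int d) then omega d powi ((int i - int a) * int b) else 0)"
proof -
  have "int j = (2 * int a - int i) mod int d \<longleftrightarrow> [int j = 2 * int a - int i] (mod int d)"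
    using assms by (simp add: cong_def)
  with assms show ?thesis
    by (simp add: kron_pauli_def)
qed

lemma index_weyl_mult:
  assumes "i < d" "j < dim_col B" "dim_row B = d"
  shows "(weyl d n m * B) $$ (i, j) = omega d ^ (i * n) * B $$ ((i + m) mod d, j)"
proof -
  have "(weyl d n m * B) $$ (i, j) = (\<Sum>k<d. weyl d n m $$ (i, k) * B $$ (k, j))"
    using assms by (simp add: scalar_prod_def atLeast0LessThan)
  also have "\<dots> = (\<Sum>k<d. if k = (i + m) mod d then omega d ^ (i * n) * B $$ (k, j) else 0)"
    using assms by (intro sum.cong) (simp_all add: weyl_def)
  also have "\<dots> = omega d ^ (i * n) * B $$ ((i + m) mod d, j)"
    using assms by simp
  finally show ?thesis .
qed

lemma chrestenson_carrier_mat: "chrestenson d \<in> carrier_mat d d"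
  by (rule carrier_matI) simp_all

lemma weyl_carrier_mat: "weyl d n m \<in> carrier_mat d d"
  by (rule carrier_matI) simp_all

lemma index_chrestenson_weyl_chrestenson:
  assumes "r < d" "c < d"
  shows "(chrestenson d * weyl d n m * chrestenson d) $$ (r, c) =
    (if d dvd r + n + c then omega d ^ (m * c) else 0)"
proof -
  define s where "s = complex_of_real (sqrt (real d))"
  have d: "d > 0" using assms by simp
  have assoc: "chrestenson d * weyl d n m * chrestenson d = chrestenson d * (weyl d n m * chrestenson d)"
    by (rule assoc_mult_mat[OF chrestenson_carrier_mat weyl_carrier_mat chrestenson_carrier_mat])
  have entry: "chrestenson d $$ (r, i) * (weyl d n m * chrestenson d) $$ (i, c) =
      omega d ^ (m * c) * omega d ^ (i * (r + n + c)) / (s * s)" if "i < d" for i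
  proof -
    have "[r * i + i * n + (i + m) mod d * c = m * c + i * (r + n + c)] (mod d)"
      by (rule cong_trans[OF cong_add[OF cong_refl cong_mult[OF cong_mod_leftI[OF cong_refl] cong_refl]]])
        (simp add: algebra_simps)
    then have "omega d ^ (r * i) * omega d ^ (i * n) * omega d ^ ((i + m) mod d * c) =
        omega d ^ (m * c) * omega d ^ (i * (r + n + c))"
      by (simp add: omega_power_cong flip: power_add)
    moreover have "chrestenson d $$ (r, i) * (weyl d n m * chrestenson d) $$ (i, c) =
        omega d ^ (r * i) * omega d ^ (i * n) * omega d ^ ((i + m) mod d * c) / (s * s)"
      using assms that d by (simp add: index_weyl_mult index_chrestenson s_def del: index_mult_mat(1))
    ultimately show ?thesis by simp
  qed
  have "(chrestenson d * weyl d n m * chrestenson d) $$ (r, c) =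
      (\<Sum>i<d. chrestenson d $$ (r, i) * (weyl d n m * chrestenson d) $$ (i, c))"
    unfolding assoc using assms
    by (subst index_mult_mat(1)) (simp_all add: scalar_prod_def atLeast0LessThan del: index_mult_mat(1))
  also have "\<dots> = (\<Sum>i<d. omega d ^ (m * c) * omega d ^ (i * (r + n + c)) / (s * s))"
    by (intro sum.cong) (simp_all add: entry)
  also have "s * s = of_nat d"
    unfolding s_def by (simp flip: of_real_mult)
  also have "(\<Sum>i<d. omega d ^ (m * c) * omega d ^ (i * (r + n + c)) / of_nat d) =
      omega d ^ (m * c) * (\<Sum>i<d. omega d ^ (i * (r + n + c))) / of_nat d"
    by (simp add: sum_distrib_left sum_divide_distrib)
  also have "\<dots> = (if d dvd r + n + c then omega d ^ (m * c) else 0)"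
    using d by (simp add: sum_omega_power)
  finally show ?thesis .
qed

lemma chrestenson_weyl_chrestenson:
  assumes a: "[2 * int a + int n = 0] (mod int d)"
    and b: "[int b = - int m] (mod int d)"
    and k: "[k = a * m] (mod d)"
  shows "chrestenson d * weyl d n m * chrestenson d = omega d ^ k \<cdot>\<^sub>m kron_pauli d a b"
proof (rule eq_matI)
  fix r c
  assume "r < dim_row (omega d ^ k \<cdot>\<^sub>m kron_pauli d a b)"
    and "c < dim_col (omega d ^ k \<cdot>\<^sub>m kron_pauli d a b)"
  then have r: "r < d" and c: "c < d" by simp_all
  obtain q where "2 * int a + int n = int d * q"
    using a by (auto simp: cong_0_iff)
  then have "int c - (2 * int a - int r) = int (r + n + c) + (- q) * int d"
    by (simp add: algebra_simps)
  then have support: "[int c = 2 * int a - int r] (mod int d) \<longleftrightarrow> d dvd r + n + c"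
    by (simp only: cong_iff_dvd_diff dvd_add_times_triv_right_iff of_nat_dvd_iff)
  have phase: "omega d ^ (m * c) = omega d ^ k * omega d powi ((int r - int a) * int b)"
    if "d dvd r + n + c"
  proof -
    have "[int k + (int r - int a) * int b = int a * int m + (int r - int a) * (- int m)] (mod int d)"
      using k by (intro cong_add cong_mult cong_refl b) (simp flip: cong_int_iff)
    also have "int a * int m + (int r - int a) * (- int m) = int m * (2 * int a - int r)"
      by (simp add: algebra_simps)
    also have "[\<dots> = int m * int c] (mod int d)"
      using that support by (intro cong_mult cong_refl) (simp add: cong_sym)
    finally have "omega d powi (int k + (int r - int a) * int b) = omega d powi (int m * int c)"
      by (rule omega_powi_cong)
    then show ?thesis
      by (simp add: power_int_add flip: power_int_of_nat)
  qed
  show "(chrestenson d * weyl d n m * chrestenson d) $$ (r, c) =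
      (omega d ^ k \<cdot>\<^sub>m kron_pauli d a b) $$ (r, c)"
    unfolding index_chrestenson_weyl_chrestenson[OF r c]
    using r c by (simp add: index_kron_pauli support phase)
qed simp_all

lemma cong_solve_double:
  assumes "odd d"
  shows "\<exists>a<d. [2 * int a = z] (mod int d)"
proof -
  have "coprime 2 (int d)"
    using assms by simp
  then obtain x where x: "[2 * x = 1] (mod int d)"
    using cong_solve_coprime_int by blast
  define a where "a = nat (x * z mod int d)"
  have d: "d > 0"
    using assms by (rule odd_pos)
  have "[2 * int a = 2 * (x * z)] (mod int d)"
    using d by (simp add: a_def cong_def mod_mult_right_eq)
  also have "2 * (x * z) = (2 * x) * z"
    by (simp add: mult.assoc)
  also have "[\<dots> = 1 * z] (mod int d)"
    using x by (rule cong_mult[OF _ cong_refl])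
  finally show ?thesis
    using d by (auto simp: a_def nat_less_iff intro!: exI[of _ a])
qed

theorem mainTheorem1:
  fixes d n m :: nat
  assumes "prime d" and "d > 2" and "n < d" and "m < d"
  shows "\<exists>k < d. \<exists>a < d. \<exists>b < d.
           chrestenson d * weyl d n m * chrestenson d = omega d ^ k \<cdot>\<^sub>m kron_pauli d a b"
proof -
  have "odd d"
    using assms(1,2) prime_odd_nat by blast
  then obtain a where "a < d" and "[2 * int a = - int n] (mod int d)"
    using cong_solve_double by blast
  then have a: "[2 * int a + int n = 0] (mod int d)"
    using cong_add[OF _ cong_refl, of "2 * int a" "- int n" _ "int n"] by simp
  define b where "b = nat (- int m mod int d)"
  have b: "[int b = - int m] (mod int d)" and "b < d"
    using assms(2) by (simp_all add: b_def cong_def nat_less_iff)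
  have "chrestenson d * weyl d n m * chrestenson d = omega d ^ (a * m mod d) \<cdot>\<^sub>m kron_pauli d a b"
    using a b by (rule chrestenson_weyl_chrestenson) simp
  moreover have "a * m mod d < d"
    using assms(2) by simp
  ultimately show ?thesis
    using \<open>a < d\<close> \<open>b < d\<close> by blast
qed

end
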